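(* Let $n\geq 1$ and, for $i\in\{1,\ldots,n+1\}$, let $\mathrm{os}_i\colon[0,1]^n\to\mathbb{R}$ be the $i$th order statistic function for $i\le n$ and $\mathrm{os}_{n+1}\equiv 1$. Let $M$ be the square matrix of order $n+1$ with entries $(M)_{ij}=\int_{[0,1]^n}\mathrm{os}_i(\mathbf{x})\,\mathrm{os}_j(\mathbf{x})\,d\mathbf{x}$ for $i,j\in\{1,\ldots,n+1\}$. Then for all $i,j\in\{1,\ldots,n+1\}$, $$(M)_{ij}=\frac{\min(i,j)\,\big(\max(i,j)+1\big)}{(n+1)(n+2)},$$ $M$ is invertible, and $$\frac{(M^{-1})_{ij}}{(n+1)(n+2)}=\begin{cases}2, & \text{if } i=j<n+1,\\ \frac{n+1}{n+2}, & \text{if } i=j=n+1,\\ -1, & \text{if } |i-j|=1,\\ 0, & \text{otherwise.}\end{cases}$$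
   Context: For $\mathbf{x}=(x_1,\ldots,x_n)\in[0,1]^n$, let $x_{(1)}\le\cdots\le x_{(n)}$ be the coordinates rearranged in ascending order; the $k$th order statistic function is $\mathrm{os}_k(\mathbf{x})=x_{(k)}$ for $k\in\{1,\ldots,n\}$. The integrals are with respect to Lebesgue measure. *)

theory Defs
  imports "HOL-Analysis.Analysis" "Jordan_Normal_Form.Matrix"
begin

text \<open>Points of [0,1]^n are functions x :: nat => real on the index set {..<n}
  (coordinates x 0, ..., x (n-1)).  The k-th order statistic (1-based k)
  is the k-th smallest coordinate.\<close>
definition os :: "nat \<Rightarrow> nat \<Rightarrow> (nat \<Rightarrow> real) \<Rightarrow> real" where
  "os n k x = sort (map x [0..<n]) ! (k - 1)"

definition os_ext :: "nat \<Rightarrow> nat \<Rightarrow> (nat \<Rightarrow> real) \<Rightarrow> real" where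
  "os_ext n i x = (if i \<le> n then os n i x else 1)"

abbreviation lebesgue_n :: "nat \<Rightarrow> (nat \<Rightarrow> real) measure" where
  "lebesgue_n n \<equiv> PiM {..<n} (\<lambda>_. lborel)"

abbreviation unit_cube :: "nat \<Rightarrow> (nat \<Rightarrow> real) set" where
  "unit_cube n \<equiv> PiE {..<n} (\<lambda>_. {0..1})"

text \<open>The (n+1)x(n+1) moment matrix; JNF indices are 0-based, so entry (i,j)
  corresponds to the paper's (i+1,j+1).\<close>
definition os_moment_mat :: "nat \<Rightarrow> real mat" where
  "os_moment_mat n = mat (n+1) (n+1)
     (\<lambda>(i,j). \<integral>x\<in>unit_cube n. os_ext n (i+1) x * os_ext n (j+1) x \<partial>lebesgue_n n)"

end

theory Submission
  imports Defs "Jordan_Normal_Form.Determinant"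
begin

text \<open>
  Pad the order statistics by os_0 = 0 and os_(n+1) = 1, and let m_n(k, l, p, q) be the
  integral of os_k^p * os_l^q over [0,1]^n. Inserting a new coordinate y into the sorted
  list turns os_k into max os_(k-1) (min y os_k), i.e. y clamped to [os_(k-1), os_k], so
  integrating y out by Fubini expresses m_(n+1) linearly through m_n. The rising-factorial
  expression (k)_p (l+p)_q / (n+1)_(p+q) obeys the same recursion and boundary values, hence
  M_ij = i (j + 1) / ((n + 1) (n + 2)) for i \<le> j. This kernel is piecewise linear in each
  index with a single kink on the diagonal, so the tridiagonal matrix of second
  differences, corrected in the last row, inverts it.
\<close>

lemma nth_insort:
  fixes y :: "'a::linorder"
  assumes "sorted xs" "j \<le> length xs"
  shows "insort y xs ! j =
           (if xs = [] then y
            else if j = 0 then min y (xs ! 0)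
            else if j = length xs then max (xs ! (j - 1)) y
            else max (xs ! (j - 1)) (min y (xs ! j)))"
  using assms
proof (induction xs arbitrary: j)
  case (Cons a xs)
  have a_le: "a \<le> (a # xs) ! i" if "i < length (a # xs)" for i
    using Cons.prems(1) that by (metis le0 nth_Cons_0 sorted_nth_mono)
  show ?case
  proof (cases "y \<le> a")
    case True
    then show ?thesis
      using a_le[of "j - 1"] Cons.prems(2) by (cases j) (auto simp: min_def max_def)
  next
    case False
    show ?thesis
    proof (cases j)
      case (Suc i)
      have "i \<le> length xs" using Cons.prems(2) Suc by simp
      then have IH: "insort y xs ! i = (if xs = [] then y else if i = 0 then min y (xs ! 0)
            else if i = length xs then max (xs ! (i - 1)) y else max (xs ! (i - 1)) (min y (xs ! i)))"
        using Cons.IH Cons.prems(1) by simp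
      have "xs \<noteq> [] \<Longrightarrow> a \<le> xs ! 0" using a_le[of 1] by simp
      then show ?thesis using False Suc IH by (cases i) (auto simp: min_def max_def)
    qed (use False in auto)
  qed
qed simp

lemma sort_snoc: "sort (xs @ [y]) = insort y (sort xs)"
  by (induction xs) (simp_all add: insort_left_comm)

lemma padded_nth_insort:
  fixes y :: "'a::linorder"
  assumes "sorted xs" "set xs \<subseteq> {lo..hi}" "y \<in> {lo..hi}" "j \<le> length xs"
  shows "(lo # insort y xs @ [hi]) ! Suc j
           = max ((lo # xs @ [hi]) ! j) (min y ((lo # xs @ [hi]) ! Suc j))"
proof -
  have "(lo # insort y xs @ [hi]) ! Suc j = insort y xs ! j"
    using assms(4) by (simp add: nth_append)
  also have "\<dots> = max ((lo # xs @ [hi]) ! j) (min y ((lo # xs @ [hi]) ! Suc j))"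
  proof (cases "xs = [] \<or> j = 0 \<or> j = length xs")
    case True
    have "xs ! i \<in> {lo..hi}" if "i < length xs" for i
      using assms(2) that nth_mem by blast
    then show ?thesis
      using True assms(3,4) by (auto simp: nth_insort[OF assms(1,4)] nth_append min_def max_def)
  next
    case False
    then show ?thesis
      using assms(4) by (auto simp: nth_insort[OF assms(1,4)] nth_append nth_Cons')
  qed
  finally show ?thesis .
qed

lemma borel_measurable_sort_nth:
  fixes f :: "nat \<Rightarrow> 'a \<Rightarrow> 'b::{second_countable_topology, linorder_topology}"
  assumes "\<And>i. i < n \<Longrightarrow> f i \<in> borel_measurable M" "j < n"
  shows "(\<lambda>x. sort (map (\<lambda>i. f i x) [0..<n]) ! j) \<in> borel_measurable M"
  using assms
proof (induction n arbitrary: j)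
  case (Suc n)
  let ?s = "\<lambda>x. sort (map (\<lambda>i. f i x) [0..<n])"
  have step: "sort (map (\<lambda>i. f i x) [0..<Suc n]) ! j =
      (if n = 0 then f n x
       else if j = 0 then min (f n x) (?s x ! 0)
       else if j = n then max (?s x ! (j - 1)) (f n x)
       else max (?s x ! (j - 1)) (min (f n x) (?s x ! j)))" for x
  proof -
    have "length (?s x) = n" by simp
    then have "?s x = [] \<longleftrightarrow> n = 0" by (metis length_0_conv)
    then show ?thesis
      using nth_insort[of "?s x" j "f n x"] Suc.prems(2) by (auto simp: sort_snoc)
  qed
  have IH: "(\<lambda>x. ?s x ! i) \<in> borel_measurable M" if "i < n" for i
    using Suc.IH Suc.prems(1) that by simp
  have fn: "f n \<in> borel_measurable M" using Suc.prems(1) by simp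
  consider "n = 0" | "0 < n" "j = 0" | "0 < n" "j = n" | "0 < j" "j < n"
    using Suc.prems(2) by linarith
  then show ?case
  proof cases
    case 1
    then show ?thesis using fn Suc.prems(2) unfolding step by simp
  next
    case 2
    then show ?thesis using fn IH[of 0]
      unfolding step by (simp add: borel_measurable_min)
  next
    case 3
    then show ?thesis using fn IH[of "n - 1"]
      unfolding step by (simp add: borel_measurable_max)
  next
    case 4
    then show ?thesis using fn IH[of "j - 1"] IH[of j]
      unfolding step by (simp add: borel_measurable_max borel_measurable_min)
  qed
qed simp

text \<open>The padding makes \<open>os_pad_fun_upd\<close> below hold uniformly for all indices \<open>1..n+1\<close>.\<close>

definition os_pad :: "nat \<Rightarrow> nat \<Rightarrow> (nat \<Rightarrow> real) \<Rightarrow> real" where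
  "os_pad n k x = (0 # sort (map x [0..<n]) @ [1]) ! k"

lemma os_ext_eq_os_pad: "1 \<le> k \<Longrightarrow> k \<le> n + 1 \<Longrightarrow> os_ext n k x = os_pad n k x"
  by (cases k) (auto simp: os_ext_def os_def os_pad_def nth_append)

lemma os_pad_0 [simp]: "os_pad n 0 x = 0"
  by (simp add: os_pad_def)

lemma os_pad_top [simp]: "os_pad n (Suc n) x = 1"
  by (simp add: os_pad_def nth_append)

lemma borel_measurable_os_pad:
  assumes "k \<le> n + 1"
  shows "os_pad n k \<in> borel_measurable (lebesgue_n n)"
proof -
  have const: "os_pad n 0 = (\<lambda>_. 0)" "os_pad n (Suc n) = (\<lambda>_. 1)"
    by (simp_all add: fun_eq_iff)
  consider "k = 0" | "k = n + 1" | "0 < k" "k \<le> n"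
    using assms by linarith
  then show ?thesis
  proof cases
    case 3
    have "(\<lambda>x. x i) \<in> borel_measurable (lebesgue_n n)" if "i < n" for i
      using measurable_component_singleton[of i "{..<n}" "\<lambda>_. lborel"] that by simp
    then have "(\<lambda>x. sort (map (\<lambda>i. x i) [0..<n]) ! (k - 1)) \<in> borel_measurable (lebesgue_n n)"
      using 3 by (intro borel_measurable_sort_nth) auto
    moreover have "os_pad n k = (\<lambda>x. sort (map (\<lambda>i. x i) [0..<n]) ! (k - 1))"
      using 3 by (auto simp: os_pad_def nth_append fun_eq_iff)
    ultimately show ?thesis by simp
  qed (simp_all add: const)
qed

lemma sorted_padded_sort:
  assumes "x \<in> unit_cube n"
  shows "sorted (0 # sort (map x [0..<n]) @ [1])"
    and "set (0 # sort (map x [0..<n]) @ [1]) \<subseteq> {0..1}"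
  using assms by (auto simp: sorted_append PiE_iff)

lemma os_pad_in_unit:
  assumes "x \<in> unit_cube n" "k \<le> n + 1"
  shows "os_pad n k x \<in> {0..1}"
proof -
  have "k < length (0 # sort (map x [0..<n]) @ [1])" using assms(2) by simp
  then show ?thesis
    unfolding os_pad_def using sorted_padded_sort(2)[OF assms(1)] nth_mem by blast
qed

lemma os_pad_mono:
  "x \<in> unit_cube n \<Longrightarrow> k \<le> l \<Longrightarrow> l \<le> n + 1 \<Longrightarrow> os_pad n k x \<le> os_pad n l x"
  unfolding os_pad_def by (rule sorted_nth_mono[OF sorted_padded_sort(1)]) auto

lemma os_pad_fun_upd:
  assumes "x \<in> unit_cube n" "y \<in> {0..1}" "1 \<le> k" "k \<le> n + 1"
  shows "os_pad (Suc n) k (x(n := y)) = max (os_pad n (k - 1) x) (min y (os_pad n k x))"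
proof -
  obtain j where k: "k = Suc j" using assms(3) by (cases k) auto
  have "sort (map (x(n := y)) [0..<Suc n]) = insort y (sort (map x [0..<n]))"
    by (simp add: sort_snoc)
  moreover have "set (sort (map x [0..<n])) \<subseteq> {0..1}" using sorted_padded_sort(2)[OF assms(1)] by simp
  ultimately show ?thesis
    unfolding os_pad_def k using padded_nth_insort[OF sorted_sort _ assms(2), of _ j] assms(4) k
    by simp
qed

lemma has_integral_monomial_on:
  fixes f :: "real \<Rightarrow> real"
  assumes "u \<le> w" and "\<And>y. y \<in> {u..w} \<Longrightarrow> f y = c * y ^ r"
    and "I = c * ((w ^ Suc r - u ^ Suc r) / Suc r)"
  shows "(f has_integral I) {u..w}"
proof -
  have "((\<lambda>y. y ^ Suc r / Suc r) has_real_derivative Suc r * y ^ r / Suc r) (at y within {u..w})"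
    for y :: real
    by (intro derivative_eq_intros) auto
  then have "((\<lambda>y. y ^ r) has_integral w ^ Suc r / Suc r - u ^ Suc r / Suc r) {u..w}"
    by (intro fundamental_theorem_of_calculus[OF assms(1)])
       (simp add: has_real_derivative_iff_has_vector_derivative)
  then have "((\<lambda>y. c * y ^ r) has_integral I) {u..w}"
    by (simp add: assms(3) has_integral_mult_right diff_divide_distrib)
  then show ?thesis
    by (rule has_integral_eq[rotated]) (simp add: assms(2))
qed

lemma integral_clamp_product:
  fixes a b c d :: real
  assumes "0 \<le> a" "a \<le> b" "b \<le> c" "c \<le> d" "d \<le> 1"
  shows "(LINT y:{0..1}|lborel. max a (min y b) ^ p * max c (min y d) ^ q)
       = real p / (real p + 1) * (a ^ Suc p * c ^ q - b ^ Suc p * c ^ q)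
         + real q / (real q + 1) * (b ^ p * c ^ Suc q - b ^ p * d ^ Suc q) + b ^ p * d ^ q"
proof -
  let ?f = "\<lambda>y. max a (min y b) ^ p * max c (min y d) ^ q"
  have I1: "(?f has_integral a ^ p * c ^ q * a) {0..a}"
    by (rule has_integral_monomial_on[where r = 0]) (use assms in auto)
  have I2: "(?f has_integral c ^ q * (b ^ Suc p - a ^ Suc p) / (real p + 1)) {a..b}"
    by (rule has_integral_monomial_on[where r = p]) (use assms in auto)
  have I3: "(?f has_integral b ^ p * c ^ q * (c - b)) {b..c}"
    by (rule has_integral_monomial_on[where r = 0]) (use assms in auto)
  have I4: "(?f has_integral b ^ p * (d ^ Suc q - c ^ Suc q) / (real q + 1)) {c..d}"
    by (rule has_integral_monomial_on[where r = q]) (use assms in auto)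
  have I5: "(?f has_integral b ^ p * d ^ q * (1 - d)) {d..1}"
    by (rule has_integral_monomial_on[where r = 0]) (use assms in auto)
  have "(?f has_integral a ^ p * c ^ q * a + c ^ q * (b ^ Suc p - a ^ Suc p) / (real p + 1)
      + b ^ p * c ^ q * (c - b) + b ^ p * (d ^ Suc q - c ^ Suc q) / (real q + 1)
      + b ^ p * d ^ q * (1 - d)) {0..1}"
    using assms
    by (intro has_integral_combine[OF _ _ _ I5] has_integral_combine[OF _ _ _ I4]
        has_integral_combine[OF _ _ _ I3] has_integral_combine[OF _ _ I1 I2]) auto
  moreover have "set_integrable lborel {0..1} ?f"
    unfolding set_integrable_def by (intro borel_integrable_compact continuous_intros) auto
  ultimately have "(LINT y:{0..1}|lborel. ?f y) = a ^ p * c ^ q * a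
      + c ^ q * (b ^ Suc p - a ^ Suc p) / (real p + 1) + b ^ p * c ^ q * (c - b)
      + b ^ p * (d ^ Suc q - c ^ Suc q) / (real q + 1) + b ^ p * d ^ q * (1 - d)"
    by (simp add: set_borel_integral_eq_integral integral_unique)
  also have "\<dots> = real p / (real p + 1) * (a ^ Suc p * c ^ q - b ^ Suc p * c ^ q)
         + real q / (real q + 1) * (b ^ p * c ^ Suc q - b ^ p * d ^ Suc q) + b ^ p * d ^ q"
  proof -
    have "(real p + 1) * (real q + 1) \<noteq> 0" by simp
    then show ?thesis by (simp add: field_simps)
  qed
  finally show ?thesis .
qed

lemma unit_cube_sets: "unit_cube n \<in> sets (lebesgue_n n)"
  by (rule sets_PiM_I_finite) auto

lemma emeasure_unit_cube: "emeasure (lebesgue_n n) (unit_cube n) = 1"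
proof -
  interpret product_sigma_finite "\<lambda>_::nat. lborel :: real measure" by standard
  have "emeasure (lebesgue_n n) (unit_cube n) = (\<Prod>i<n. emeasure lborel {0..1::real})"
    by (rule emeasure_PiM) auto
  then show ?thesis by simp
qed

lemma set_integrable_unit_cube:
  fixes f :: "(nat \<Rightarrow> real) \<Rightarrow> real"
  assumes "f \<in> borel_measurable (lebesgue_n n)" and "\<And>x. x \<in> unit_cube n \<Longrightarrow> \<bar>f x\<bar> \<le> B"
  shows "set_integrable (lebesgue_n n) (unit_cube n) f"
  unfolding set_integrable_def
proof (rule Bochner_Integration.integrable_bound)
  show "integrable (lebesgue_n n) (\<lambda>x. B * indicator (unit_cube n) x)"
    using unit_cube_sets emeasure_unit_cube by (intro integrable_mult_right integrable_real_indicator) auto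
  show "(\<lambda>x. indicator (unit_cube n) x *\<^sub>R f x) \<in> borel_measurable (lebesgue_n n)"
    using unit_cube_sets assms(1) by measurable
  show "AE x in lebesgue_n n. norm (indicator (unit_cube n) x *\<^sub>R f x) \<le> norm (B * indicator (unit_cube n) x)"
    using assms(2) by (intro AE_I2) (auto simp: indicator_def intro: order_trans[OF _ abs_ge_self])
qed

lemma set_integral_unit_cube_Suc:
  fixes f :: "(nat \<Rightarrow> real) \<Rightarrow> real"
  assumes "set_integrable (lebesgue_n (Suc n)) (unit_cube (Suc n)) f"
  shows "(LINT z:unit_cube (Suc n)|lebesgue_n (Suc n). f z)
       = (LINT x:unit_cube n|lebesgue_n n. LINT y:{0..1}|lborel. f (x(n := y)))"
proof -
  interpret product_sigma_finite "\<lambda>_::nat. lborel :: real measure" by standard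
  have Suc_eq: "lebesgue_n (Suc n) = PiM (insert n {..<n}) (\<lambda>_. lborel)"
    by (simp add: lessThan_Suc)
  have cube_upd: "indicator (unit_cube (Suc n)) (x(n := y))
      = indicator (unit_cube n) x * (indicator {0..1} y :: real)" if "x \<in> space (lebesgue_n n)" for x and y :: real
  proof -
    have "x(n := y) \<in> unit_cube (Suc n) \<longleftrightarrow> x \<in> unit_cube n \<and> y \<in> {0..1}"
      using that by (auto simp: space_PiM PiE_iff extensional_def)
    then show ?thesis by (simp add: indicator_def)
  qed
  have "integrable (PiM (insert n {..<n}) (\<lambda>_. lborel)) (\<lambda>z. indicator (unit_cube (Suc n)) z *\<^sub>R f z)"
    using assms Suc_eq by (simp add: set_integrable_def)
  then have "(LINT z:unit_cube (Suc n)|lebesgue_n (Suc n). f z)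
      = (\<integral>x. (\<integral>y. indicator (unit_cube (Suc n)) (x(n := y)) * f (x(n := y)) \<partial>lborel) \<partial>lebesgue_n n)"
    unfolding set_lebesgue_integral_def Suc_eq by (subst product_integral_insert) auto
  also have "\<dots> = (LINT x:unit_cube n|lebesgue_n n. LINT y:{0..1}|lborel. f (x(n := y)))"
    unfolding set_lebesgue_integral_def
    by (intro Bochner_Integration.integral_cong) (simp_all add: cube_upd mult.assoc)
  finally show ?thesis .
qed

definition os_moment :: "nat \<Rightarrow> nat \<Rightarrow> nat \<Rightarrow> nat \<Rightarrow> nat \<Rightarrow> real" where
  "os_moment n k l p q = (LINT x:unit_cube n|lebesgue_n n. os_pad n k x ^ p * os_pad n l x ^ q)"

lemma set_integrable_os_monomial:
  assumes "k \<le> n + 1" "l \<le> n + 1"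
  shows "set_integrable (lebesgue_n n) (unit_cube n) (\<lambda>x. os_pad n k x ^ p * os_pad n l x ^ q)"
proof (rule set_integrable_unit_cube)
  show "(\<lambda>x. os_pad n k x ^ p * os_pad n l x ^ q) \<in> borel_measurable (lebesgue_n n)"
    using borel_measurable_os_pad[OF assms(1)] borel_measurable_os_pad[OF assms(2)] by measurable
  fix x assume "x \<in> unit_cube n"
  then have "os_pad n k x \<in> {0..1}" "os_pad n l x \<in> {0..1}"
    using os_pad_in_unit assms by auto
  then show "\<bar>os_pad n k x ^ p * os_pad n l x ^ q\<bar> \<le> 1"
    by (simp add: abs_mult power_le_one mult_le_one)
qed

lemma os_moment_cong:
  assumes "\<And>x. x \<in> unit_cube n \<Longrightarrow>
      os_pad n k x ^ p * os_pad n l x ^ q = os_pad n k' x ^ p' * os_pad n l' x ^ q'"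
  shows "os_moment n k l p q = os_moment n k' l' p' q'"
  unfolding os_moment_def using unit_cube_sets assms by (intro set_lebesgue_integral_cong) auto

lemma os_moment_const:
  assumes "\<And>x. x \<in> unit_cube n \<Longrightarrow> os_pad n k x ^ p * os_pad n l x ^ q = c"
  shows "os_moment n k l p q = c"
proof -
  have "os_moment n k l p q = (LINT x:unit_cube n|lebesgue_n n. c)"
    unfolding os_moment_def using unit_cube_sets assms by (intro set_lebesgue_integral_cong) auto
  also have "\<dots> = c"
    using unit_cube_sets emeasure_unit_cube by (simp add: set_integral_const measure_def)
  finally show ?thesis .
qed

text \<open>Fubini in the last coordinate. The hypothesis \<open>k < l \<or> q = 0\<close> keeps the two clamping
  windows [os_(k-1), os_k] and [os_(l-1), os_l] in order.\<close>

lemma os_moment_Suc: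
  assumes "1 \<le> k" "k \<le> l" "l \<le> n + 1" "k < l \<or> q = 0"
  shows "os_moment (Suc n) k l p q
       = real p / (real p + 1) * (os_moment n (k - 1) (l - 1) (Suc p) q - os_moment n k (l - 1) (Suc p) q)
         + real q / (real q + 1) * (os_moment n k (l - 1) p (Suc q) - os_moment n k l p (Suc q))
         + os_moment n k l p q"
proof -
  let ?X = "os_pad n"
  have inner: "(LINT y:{0..1}|lborel. os_pad (Suc n) k (x(n := y)) ^ p * os_pad (Suc n) l (x(n := y)) ^ q)
      = real p / (real p + 1) * (?X (k - 1) x ^ Suc p * ?X (l - 1) x ^ q - ?X k x ^ Suc p * ?X (l - 1) x ^ q)
        + real q / (real q + 1) * (?X k x ^ p * ?X (l - 1) x ^ Suc q - ?X k x ^ p * ?X l x ^ Suc q)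
        + ?X k x ^ p * ?X l x ^ q" if x: "x \<in> unit_cube n" for x
  proof -
    have "(LINT y:{0..1}|lborel. os_pad (Suc n) k (x(n := y)) ^ p * os_pad (Suc n) l (x(n := y)) ^ q)
        = (LINT y:{0..1}|lborel. max (?X (k - 1) x) (min y (?X k x)) ^ p
                                 * max (?X (l - 1) x) (min y (?X l x)) ^ q)"
      using assms by (intro set_lebesgue_integral_cong) (auto simp: os_pad_fun_upd[OF x])
    moreover have "0 \<le> ?X (k - 1) x" "?X (k - 1) x \<le> ?X k x" "?X k x \<le> ?X (l - 1) x \<or> k = l"
        "?X (l - 1) x \<le> ?X l x" "?X l x \<le> 1"
      using assms os_pad_in_unit[OF x] os_pad_mono[OF x] by auto
    \<comment> \<open>for \<open>q = 0\<close> the second window is irrelevant and may be taken to be [os_k, os_k]\<close>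
    ultimately show ?thesis
      using assms integral_clamp_product[of "?X (k - 1) x" "?X k x" "?X k x" "?X k x" p 0]
        integral_clamp_product[of "?X (k - 1) x" "?X k x" "?X (l - 1) x" "?X l x" p q]
      by auto
  qed
  have monomial_integrable: "set_integrable (lebesgue_n n) (unit_cube n) (\<lambda>x. ?X i x ^ r * ?X j x ^ s)"
    if "i \<le> n + 1" "j \<le> n + 1" for i j r s
    using set_integrable_os_monomial that by blast
  have "os_moment (Suc n) k l p q = (LINT x:unit_cube n|lebesgue_n n.
        LINT y:{0..1}|lborel. os_pad (Suc n) k (x(n := y)) ^ p * os_pad (Suc n) l (x(n := y)) ^ q)"
    unfolding os_moment_def using assms
    by (intro set_integral_unit_cube_Suc set_integrable_os_monomial) auto
  also have "\<dots> = (LINT x:unit_cube n|lebesgue_n n.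
        real p / (real p + 1) * (?X (k - 1) x ^ Suc p * ?X (l - 1) x ^ q - ?X k x ^ Suc p * ?X (l - 1) x ^ q)
        + real q / (real q + 1) * (?X k x ^ p * ?X (l - 1) x ^ Suc q - ?X k x ^ p * ?X l x ^ Suc q)
        + ?X k x ^ p * ?X l x ^ q)"
    by (rule set_lebesgue_integral_cong) (simp_all add: unit_cube_sets inner)
  also have "\<dots> = real p / (real p + 1) * (os_moment n (k - 1) (l - 1) (Suc p) q - os_moment n k (l - 1) (Suc p) q)
         + real q / (real q + 1) * (os_moment n k (l - 1) p (Suc q) - os_moment n k l p (Suc q))
         + os_moment n k l p q"
    unfolding os_moment_def using assms
      monomial_integrable[of "k - 1" "l - 1" "Suc p" q] monomial_integrable[of k "l - 1" "Suc p" q]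
      monomial_integrable[of k "l - 1" p "Suc q"] monomial_integrable[of k l p "Suc q"]
      monomial_integrable[of k l p q]
    by simp
  finally show ?thesis .
qed

definition os_moment_poch :: "nat \<Rightarrow> nat \<Rightarrow> nat \<Rightarrow> nat \<Rightarrow> nat \<Rightarrow> real" where
  "os_moment_poch n k l p q
     = pochhammer (real k) p * pochhammer (real (l + p)) q / pochhammer (real (n + 1)) (p + q)"

lemma os_moment_poch_Suc:
  assumes "1 \<le> k" "1 \<le> l"
  shows "os_moment_poch (Suc n) k l p q
       = real p / (real p + 1) * (os_moment_poch n (k - 1) (l - 1) (Suc p) q - os_moment_poch n k (l - 1) (Suc p) q)
         + real q / (real q + 1) * (os_moment_poch n k (l - 1) p (Suc q) - os_moment_poch n k l p (Suc q))
         + os_moment_poch n k l p q"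
proof -
  define A where "A = pochhammer (real k) p"
  define B where "B = pochhammer (real (l + p)) q"
  define R where "R = pochhammer (real (Suc n + 1)) (p + q)"
  have "R > 0" unfolding R_def by (rule pochhammer_pos) simp
  have k: "pochhammer (real (k - 1)) (Suc p) = (real k - 1) * A"
    using assms(1) by (simp add: A_def pochhammer_rec)
  have k': "pochhammer (real k) (Suc p) = A * (real k + real p)"
    by (simp add: A_def pochhammer_Suc)
  have l: "pochhammer (real (l - 1 + Suc p)) q = B"
    using assms(2) by (simp add: B_def)
  have l': "pochhammer (real (l - 1 + p)) (Suc q) = (real l + real p - 1) * B"
    using assms(2) by (simp add: B_def pochhammer_rec add_ac)
  have l'': "pochhammer (real (l + p)) (Suc q) = B * (real l + real p + real q)"
    by (simp add: B_def pochhammer_Suc)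
  have N: "pochhammer (real (n + 1)) (Suc (p + q)) = (real n + 1) * R"
    by (simp add: R_def pochhammer_rec add_ac)
  moreover have "pochhammer (real (n + 1)) (Suc (p + q))
      = pochhammer (real (n + 1)) (p + q) * (real n + 1 + real p + real q)"
    by (simp add: pochhammer_Suc)
  ultimately have E: "pochhammer (real (n + 1)) (p + q) = (real n + 1) * R / (real n + 1 + real p + real q)"
    by (simp add: field_simps)
  have Suc_add: "Suc p + q = Suc (p + q)" "p + Suc q = Suc (p + q)"
    by simp_all
  define u where "u = A * B / ((real n + 1) * R)"
  have nonzero: "R \<noteq> 0" "(real n + 1) * R \<noteq> 0" "real n + 1 + real p + real q \<noteq> 0"
    using \<open>R > 0\<close> by (simp_all add: add_pos_nonneg)
  have in_units_of_u: "os_moment_poch (Suc n) k l p q = (real n + 1) * u"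
    "os_moment_poch n (k - 1) (l - 1) (Suc p) q = (real k - 1) * u"
    "os_moment_poch n k (l - 1) (Suc p) q = (real k + real p) * u"
    "os_moment_poch n k (l - 1) p (Suc q) = (real l + real p - 1) * u"
    "os_moment_poch n k l p (Suc q) = (real l + real p + real q) * u"
    "os_moment_poch n k l p q = (real n + 1 + real p + real q) * u"
    unfolding os_moment_poch_def Suc_add k k' l l' l'' N E u_def
    unfolding A_def[symmetric] B_def[symmetric] R_def[symmetric]
    using nonzero by (simp_all add: field_simps)
  have "(real p + 1) * (real q + 1) \<noteq> 0" by simp
  then show ?thesis unfolding in_units_of_u by (simp add: field_simps)
qed

lemma os_moment_exp_0: "os_moment n k l p 0 = os_moment n k k p 0"
  by (rule os_moment_cong) simp

lemma os_moment_poch_exp_0: "os_moment_poch n k l p 0 = os_moment_poch n k k p 0"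
  by (simp add: os_moment_poch_def)

lemma os_moment_diag_eq_poch:
  assumes "k \<le> n + 1"
    and interior: "1 \<le> k \<Longrightarrow> k \<le> n \<Longrightarrow> os_moment n k k r 0 = os_moment_poch n k k r 0"
  shows "os_moment n k k r 0 = os_moment_poch n k k r 0"
proof -
  consider "k = 0" | "k = Suc n" | "1 \<le> k" "k \<le> n"
    using assms(1) by linarith
  then show ?thesis
  proof cases
    case 1
    then have "os_moment n k k r 0 = 0 ^ r" by (intro os_moment_const) simp
    then show ?thesis using 1 by (simp add: os_moment_poch_def pochhammer_0_left)
  next
    case 2
    then have "os_moment n k k r 0 = 1" by (intro os_moment_const) simp
    moreover have "pochhammer (real (Suc n)) r \<noteq> 0" by (simp add: pochhammer_eq_0_iff)
    ultimately show ?thesis using 2 by (simp add: os_moment_poch_def)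
  qed (rule interior)
qed

lemma os_moment_eq_poch_of_interior:
  assumes interior: "\<And>k l p q. 1 \<le> k \<Longrightarrow> k \<le> l \<Longrightarrow> l \<le> n \<Longrightarrow> k < l \<or> q = 0 \<Longrightarrow>
      os_moment n k l p q = os_moment_poch n k l p q"
    and "k \<le> l" "l \<le> n + 1"
  shows "os_moment n k l p q = os_moment_poch n k l p q"
proof -
  have diag: "os_moment n i i r 0 = os_moment_poch n i i r 0" if "i \<le> n + 1" for i r
    using that by (rule os_moment_diag_eq_poch) (rule interior; simp)
  consider "l = Suc n" | "k = 0" "l \<le> n" | "1 \<le> k" "k = l" "l \<le> n" | "1 \<le> k" "k < l" "l \<le> n"
    using assms(2,3) by linarith
  then show ?thesis
  proof cases
    case 1
    have "os_moment n k (Suc n) p q = os_moment n k k p 0" by (rule os_moment_cong) simp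
    moreover have "os_moment_poch n k (Suc n) p q = os_moment_poch n k k p 0"
    proof -
      have "pochhammer (real (n + 1)) (p + q)
          = pochhammer (real (n + 1)) p * pochhammer (real (Suc n + p)) q"
        by (simp add: pochhammer_product' add_ac)
      moreover have "pochhammer (real (Suc n + p)) q \<noteq> 0" by (simp add: pochhammer_eq_0_iff)
      ultimately show ?thesis by (simp add: os_moment_poch_def)
    qed
    ultimately show ?thesis using 1 assms(2) diag[of k p] by simp
  next
    case 2
    show ?thesis
    proof (cases "p = 0")
      case True
      have "os_moment n 0 l 0 q = os_moment n l l q 0" by (rule os_moment_cong) simp
      then show ?thesis using 2 True diag[of l q] assms(3) by (simp add: os_moment_poch_def)
    next
      case False
      then have "os_moment n 0 l p q = 0" by (intro os_moment_const) simp
      then show ?thesis using 2 False by (simp add: os_moment_poch_def pochhammer_0_left)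
    qed
  next
    case 3
    have "os_moment n k k p q = os_moment n k k (p + q) 0" by (rule os_moment_cong) (simp add: power_add)
    moreover have "os_moment_poch n k k p q = os_moment_poch n k k (p + q) 0"
      by (simp add: os_moment_poch_def pochhammer_product')
    ultimately show ?thesis using 3 diag by simp
  qed (rule interior; use assms in simp)
qed

theorem os_moment_eq_poch:
  "k \<le> l \<Longrightarrow> l \<le> n + 1 \<Longrightarrow> os_moment n k l p q = os_moment_poch n k l p q"
proof (induction n arbitrary: k l p q)
  case 0
  show ?case by (rule os_moment_eq_poch_of_interior[OF _ 0]) auto
next
  case (Suc n)
  have IH: "os_moment n i j r s = os_moment_poch n i j r s"
    if "i \<le> n + 1" "j \<le> n + 1" "i \<le> j \<or> s = 0" for i j r s
  proof (cases "i \<le> j")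
    case False
    then have "s = 0" using that by simp
    then show ?thesis
      using Suc.IH[of i i r 0] that by (simp add: os_moment_exp_0[of n i j] os_moment_poch_exp_0[of n i j])
  qed (use Suc.IH that in simp)
  show ?case
  proof (rule os_moment_eq_poch_of_interior[OF _ Suc.prems])
    fix k l p q :: nat assume interior: "1 \<le> k" "k \<le> l" "l \<le> Suc n" "k < l \<or> q = 0"
    then have "os_moment n (k - 1) (l - 1) (Suc p) q = os_moment_poch n (k - 1) (l - 1) (Suc p) q"
      "os_moment n k (l - 1) (Suc p) q = os_moment_poch n k (l - 1) (Suc p) q"
      "os_moment n k l p q = os_moment_poch n k l p q"
      by (intro IH; linarith)+
    moreover have "os_moment n k (l - 1) p (Suc q) = os_moment_poch n k (l - 1) p (Suc q)"
      "os_moment n k l p (Suc q) = os_moment_poch n k l p (Suc q)" if "k < l"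
      using interior that by (intro IH; linarith)+
    ultimately show "os_moment (Suc n) k l p q = os_moment_poch (Suc n) k l p q"
      using interior by (cases "k < l") (simp_all add: os_moment_Suc os_moment_poch_Suc)
  qed
qed


lemma os_moment_mat_entry:
  assumes "i < n + 1" "j < n + 1"
  shows "os_moment_mat n $$ (i, j)
       = (real (min i j) + 1) * (real (max i j) + 2) / ((real n + 1) * (real n + 2))"
proof -
  have "os_moment_mat n $$ (i, j) = os_moment n (Suc i) (Suc j) 1 1"
    unfolding os_moment_mat_def os_moment_def using assms unit_cube_sets
    by (auto intro!: set_lebesgue_integral_cong simp: os_ext_eq_os_pad)
  also have "\<dots> = os_moment n (Suc (min i j)) (Suc (max i j)) 1 1"
    by (rule os_moment_cong) (simp add: min_def max_def)
  also have "\<dots> = os_moment_poch n (Suc (min i j)) (Suc (max i j)) 1 1"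
    using assms by (intro os_moment_eq_poch) auto
  also have "\<dots> = (real (min i j) + 1) * (real (max i j) + 2) / ((real n + 1) * (real n + 2))"
    by (simp add: os_moment_poch_def pochhammer_Suc numeral_2_eq_2 algebra_simps)
  finally show ?thesis .
qed

lemma sum_tridiagonal_column:
  fixes g :: "nat \<Rightarrow> 'a::comm_ring_1"
  assumes "b < N"
  shows "(\<Sum>k<N. g k * (if k = b then \<alpha> else if k = b + 1 \<or> b = k + 1 then \<beta> else 0))
       = \<alpha> * g b + \<beta> * ((if 0 < b then g (b - 1) else 0) + (if b + 1 < N then g (b + 1) else 0))"
proof -
  have column: "(\<lambda>k. g k * (if k = b then \<alpha> else if k = b + 1 \<or> b = k + 1 then \<beta> else 0))
      = (\<lambda>k. (if k = b then \<alpha> * g b else 0) + (if k = b - 1 then if 0 < b then \<beta> * g (b - 1) else 0 else 0)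
          + (if k = b + 1 then \<beta> * g (b + 1) else 0))"
    by (auto simp: fun_eq_iff mult.commute)
  show ?thesis
    unfolding column using assms by (auto simp: sum.distrib distrib_left)
qed

text \<open>\<open>g\<close> is linear on each side of its kink at \<open>a\<close>, so its second difference vanishes
  away from \<open>a\<close>; the last row uses \<open>g n = (a + 1) (n + 2)\<close> instead of a neighbour.\<close>

lemma second_difference:
  fixes a b n :: nat
  assumes "a \<le> n" "b \<le> n"
  defines "g k \<equiv> (real (min a k) + 1) * (real (max a k) + 2)"
  shows "(if b < n then 2 else (real n + 1) / (real n + 2)) * g b
           - (if 0 < b then g (b - 1) else 0) - (if b < n then g (b + 1) else 0)
         = (if a = b then 1 else 0)"
  using assms(1,2) unfolding g_def
  by (cases "b = 0"; cases "a = b"; cases "b = n"; cases "a < b")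
     (auto simp: min_def max_def field_simps)

definition os_moment_inv :: "nat \<Rightarrow> real mat" where
  "os_moment_inv n = mat (n + 1) (n + 1) (\<lambda>(i, j). (real n + 1) * (real n + 2) *
     (if i = j then if i < n then 2 else (real n + 1) / (real n + 2)
      else if i = j + 1 \<or> j = i + 1 then -1 else 0))"

lemma os_moment_mat_mult_inv: "os_moment_mat n * os_moment_inv n = 1\<^sub>m (n + 1)"
proof (rule eq_matI)
  fix a b assume "a < dim_row (1\<^sub>m (n + 1))" "b < dim_col (1\<^sub>m (n + 1))"
  then have a: "a < n + 1" and b: "b < n + 1" by auto
  define g where "g k = (real (min a k) + 1) * (real (max a k) + 2)" for k
  define \<alpha> where "\<alpha> = (if b < n then 2 else (real n + 1) / (real n + 2))"
  have c: "(real n + 1) * (real n + 2) \<noteq> 0" by simp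
  have "(os_moment_mat n * os_moment_inv n) $$ (a, b)
      = (\<Sum>k<n + 1. os_moment_mat n $$ (a, k) * os_moment_inv n $$ (k, b))"
    using a b by (simp add: os_moment_mat_def os_moment_inv_def scalar_prod_def atLeast0LessThan)
  also have "\<dots> = (\<Sum>k<n + 1. g k * (if k = b then \<alpha> else if k = b + 1 \<or> b = k + 1 then -1 else 0))"
    using a b c by (intro sum.cong) (simp_all add: os_moment_mat_entry os_moment_inv_def g_def \<alpha>_def)
  also have "\<dots> = \<alpha> * g b - (if 0 < b then g (b - 1) else 0) - (if b < n then g (b + 1) else 0)"
    using b by (subst sum_tridiagonal_column) auto
  also have "\<dots> = (if a = b then 1 else 0)"
    unfolding g_def \<alpha>_def using a b by (intro second_difference) auto
  also have "\<dots> = 1\<^sub>m (n + 1) $$ (a, b)"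
    using a b by simp
  finally show "(os_moment_mat n * os_moment_inv n) $$ (a, b) = 1\<^sub>m (n + 1) $$ (a, b)" .
qed (simp_all add: os_moment_mat_def os_moment_inv_def)

lemma os_moment_mat_carrier: "os_moment_mat n \<in> carrier_mat (n + 1) (n + 1)"
  by (simp add: os_moment_mat_def)

lemma os_moment_inv_carrier: "os_moment_inv n \<in> carrier_mat (n + 1) (n + 1)"
  by (simp add: os_moment_inv_def)

lemma os_moment_inv_mult_mat: "os_moment_inv n * os_moment_mat n = 1\<^sub>m (n + 1)"
  by (rule mat_mult_left_right_inverse[OF os_moment_mat_carrier os_moment_inv_carrier
        os_moment_mat_mult_inv])

lemma invertible_os_moment_mat: "invertible_mat (os_moment_mat n)"
  unfolding invertible_mat_def inverts_mat_def
  using os_moment_mat_carrier[of n] os_moment_inv_carrier[of n] os_moment_mat_mult_inv[of n]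
    os_moment_inv_mult_mat[of n]
  by (auto intro!: exI[of _ "os_moment_inv n"])

lemma os_moment_inv_unique:
  assumes "B \<in> carrier_mat (n + 1) (n + 1)" and "inverts_mat B (os_moment_mat n)"
  shows "B = os_moment_inv n"
proof -
  have "B = B * (os_moment_mat n * os_moment_inv n)"
    using assms(1) by (simp add: os_moment_mat_mult_inv)
  also have "\<dots> = (B * os_moment_mat n) * os_moment_inv n"
    by (rule assoc_mult_mat[symmetric, OF assms(1) os_moment_mat_carrier os_moment_inv_carrier])
  also have "\<dots> = os_moment_inv n"
    using assms os_moment_inv_carrier[of n] by (simp add: inverts_mat_def)
  finally show ?thesis .
qed

theorem lemma1:
  fixes n :: nat
  assumes "n \<ge> 1"
  shows "(\<forall>i\<in>{1..n+1}. \<forall>j\<in>{1..n+1}.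
            os_moment_mat n $$ (i-1, j-1)
              = real (min i j) * (real (max i j) + 1) / ((real n + 1) * (real n + 2)))
       \<and> invertible_mat (os_moment_mat n)
       \<and> (\<forall>B \<in> carrier_mat (n+1) (n+1).
            inverts_mat (os_moment_mat n) B \<and> inverts_mat B (os_moment_mat n) \<longrightarrow>
            (\<forall>i\<in>{1..n+1}. \<forall>j\<in>{1..n+1}.
               B $$ (i-1, j-1) / ((real n + 1) * (real n + 2)) =
                 (if i = j \<and> i < n+1 then 2
                  else if i = j \<and> i = n+1 then (real n + 1) / (real n + 2)
                  else if i = j + 1 \<or> j = i + 1 then -1
                  else 0)))"
  apply (intro conjI ballI impI)
  subgoal for i j by (auto simp: os_moment_mat_entry min_def max_def)
  subgoal by (rule invertible_os_moment_mat)
  subgoal for B i j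
    using os_moment_inv_unique[of B n] by (cases i; cases j) (auto simp: os_moment_inv_def)
  done

end
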